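(* Let $a,d$ be positive integers with $d$ not a perfect square, $\alpha=a+\sqrt d$, $N_\alpha=a^2-d$, and suppose $-N_\alpha$ is an odd perfect square. Let $t,u$ be positive integers with $\varepsilon=(t+u\sqrt d)/2$ a unit of the ring of integers of $\mathbb{Q}(\sqrt d)$, define $x_k+y_k\sqrt d=\alpha\varepsilon^{2k}$, suppose $y_{-1}>1$, and suppose that for some $\sigma\in\{1,-1\}$, $y_\sigma$ is the square of an integer. (a) If $t^2-du^2=4$, then $t\equiv2\pmod4$ and $u\equiv0\pmod4$. (b) If $t^2-du^2=-4$, then $u\equiv2\pmod4$. *)

theory Defs
  imports "HOL-Analysis.Analysis" "HOL-Computational_Algebra.Polynomial"
begin

text \<open>For integers a, d, t, u and an integer k, the rational coordinate y_k defined by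
  x_k + y_k sqrt d = alpha * epsilon^(2k), where alpha = a + sqrt d and
  epsilon = (t + u sqrt d)/2 (x_k, y_k rational; unique when d is not a perfect square).\<close>
definition yk :: "int \<Rightarrow> int \<Rightarrow> int \<Rightarrow> int \<Rightarrow> int \<Rightarrow> rat" where
  "yk a d t u k = (THE y::rat. \<exists>x::rat.
      (of_int a + sqrt (of_int d)) * ((of_int t + of_int u * sqrt (of_int d)) / 2) powi (2 * k)
        = of_rat x + of_rat y * sqrt (of_int d))"

definition is_unit_OK :: "real \<Rightarrow> bool" where
  "is_unit_OK e \<longleftrightarrow> e \<noteq> 0 \<and> algebraic_int e \<and> algebraic_int (inverse e)"

end

theory Submission
  imports Defs
begin

text \<open>Since \<open>t\<^sup>2 - d u\<^sup>2 = \<plusminus>4\<close>, \<open>\<epsilon>\<^sup>-\<^sup>2\<close> is the square of the conjugate \<open>(t - u \<surd>d)/2\<close>, so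
  \<open>4 y\<^sub>\<sigma> = t\<^sup>2 + d u\<^sup>2 + 2 \<sigma> a t u\<close> and \<open>y\<^sub>\<sigma> = m\<^sup>2\<close> makes this divisible by 4. Adding the norm equation,
  \<open>t (t + \<sigma> a u)\<close> is even; if \<open>t\<close> were odd, \<open>a\<close> and \<open>u\<close> would be odd, hence \<open>d = a\<^sup>2 + s\<^sup>2\<close> even
  and the norm odd. So \<open>t\<close> is even, and as \<open>d \<equiv> 1, 2 (mod 4)\<close> also \<open>u\<close> is even; the congruences then
  follow from \<open>(t/2)\<^sup>2 - d (u/2)\<^sup>2 = \<plusminus>1\<close> read modulo 4.\<close>

lemma int_square_mod_4: "(x::int)^2 mod 4 = (if even x then 0 else 1)"
proof (cases "even x")
  case True
  then obtain k where "x = 2*k" by blast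
  then have "x^2 = 4*k^2" by (simp add: power_mult_distrib)
  then show ?thesis using True by simp
next
  case False
  then obtain k where "x = 2*k + 1" using oddE by blast
  then have "x^2 = 4*(k^2 + k) + 1" by (simp add: power2_eq_square algebra_simps)
  then show ?thesis using False by presburger
qed

lemma sum_of_squares_odd_mod_4:
  fixes a s :: int
  assumes "odd s"
  shows "(a^2 + s^2) mod 4 \<in> {1, 2}"
proof -
  have "(a^2 + s^2) mod 4 = (a^2 mod 4 + s^2 mod 4) mod 4" by (simp add: mod_add_eq)
  then show ?thesis using assms by (simp add: int_square_mod_4)
qed

lemma norm_pm4_even_fst:
  fixes a s d t u :: int
  assumes "odd s" and "d = a^2 + s^2"
    and norm: "t^2 - d*u^2 = 4 \<or> t^2 - d*u^2 = -4"
    and div: "4 dvd t^2 + d*u^2 + 2*a*t*u"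
  shows "even t"
proof (rule ccontr)
  assume "odd t"
  have "4 dvd t^2 - d*u^2" using norm by auto
  with div have "4 dvd 2 * (t * (t + a*u))"
    using dvd_add[of 4 "t^2 + d*u^2 + 2*a*t*u" "t^2 - d*u^2"]
    by (simp add: power2_eq_square algebra_simps)
  then have "even (t * (t + a*u))" using dvd_mult_cancel_left[of "2::int" 2] by simp
  with \<open>odd t\<close> have "odd (a*u)" by auto
  with assms(1,2) have "even d" by simp
  with \<open>odd t\<close> have "odd (t^2 - d*u^2)" by simp
  with norm show False by (elim disjE) simp_all
qed

lemma norm_div4_even_snd:
  fixes d t u :: int
  assumes "d mod 4 \<in> {1, 2}" and "even t" and "4 dvd t^2 - d*u^2"
  shows "even u"
proof (rule ccontr)
  assume "odd u"
  have "4 dvd t^2" using \<open>even t\<close> int_square_mod_4[of t] by presburger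
  then have "4 dvd t^2 - (t^2 - d*u^2)" using assms(3) by (rule dvd_diff)
  then have "4 dvd d*u^2" by simp
  moreover have "(d*u^2) mod 4 = d mod 4"
    using \<open>odd u\<close> mod_mult_right_eq[of d "u^2" 4] by (simp add: int_square_mod_4)
  ultimately show False using assms(1) by auto
qed

lemma norm_form_mod_4:
  fixes d x y :: int
  shows "(x^2 - d*y^2) mod 4 = ((if even x then 0 else 1) - (if even y then 0 else d)) mod 4"
proof -
  have "(x^2 - d*y^2) mod 4 = (x^2 mod 4 - (d * (y^2 mod 4)) mod 4) mod 4"
    by (simp add: mod_diff_eq mod_mult_right_eq)
  then show ?thesis by (simp add: int_square_mod_4 mod_diff_right_eq mod_minus_eq)
qed

lemma pell_plus_one_mod_4:
  fixes d x y :: int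
  assumes "d mod 4 \<in> {1, 2}" and "x^2 - d*y^2 = 1"
  shows "odd x \<and> even y"
  using norm_form_mod_4[of x d y] assms by (auto split: if_splits) presburger+

lemma pell_minus_one_mod_4:
  fixes d x y :: int
  assumes "x^2 - d*y^2 = -1"
  shows "odd y"
  using norm_form_mod_4[of x d y] assms by (auto split: if_splits)

lemma sqrt_of_int_not_rational:
  fixes d :: int
  assumes "0 \<le> d" and "\<not> (\<exists>r. d = r^2)"
  shows "sqrt (of_int d) \<notin> \<rat>"
proof
  assume rational: "sqrt (of_int d) \<in> \<rat>"
  have "algebraic_int (sqrt (of_int d))"
    by (intro algebraic_int_sqrt int_imp_algebraic_int) simp
  then have "sqrt (of_int d) \<in> \<int>" using rational by (rule rational_algebraic_int_is_int)
  then obtain r where r: "sqrt (of_int d) = of_int r" by (elim Ints_cases)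
  have "of_int d = (sqrt (of_int d))^2" using assms(1) by simp
  also have "\<dots> = of_int (r^2)" using r by simp
  finally show False using assms(2) by (metis of_int_eq_iff)
qed

lemma irrational_coord_unique:
  fixes D :: real
  assumes "D \<notin> \<rat>" and "of_rat x + of_rat y * D = of_rat x' + of_rat y' * D"
  shows "y = y'"
proof (rule ccontr)
  assume "y \<noteq> y'"
  with assms(2) have "D = of_rat ((x' - x) / (y - y'))"
    by (simp add: of_rat_divide of_rat_diff field_simps)
  with assms(1) show False by (simp add: Rats_def)
qed

lemma yk_eqI:
  assumes "sqrt (of_int d) \<notin> \<rat>"
    and "(of_int a + sqrt (of_int d)) * ((of_int t + of_int u * sqrt (of_int d)) / 2) powi (2 * k)
      = of_rat x + of_rat y * sqrt (of_int d)"
  shows "yk a d t u k = y"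
  unfolding yk_def
  by (rule the_equality) (use assms irrational_coord_unique in \<open>metis\<close>)+

lemma yk_one:
  fixes a d t u :: int
  assumes "0 \<le> d" and "sqrt (of_int d) \<notin> \<rat>"
  shows "yk a d t u 1 = of_int (t^2 + d*u^2 + 2*a*t*u) / 4"
proof (rule yk_eqI[OF assms(2)])
  let ?D = "sqrt (of_int d) :: real"
  have "(of_int a + ?D) * ((of_int t + of_int u * ?D) / 2) powi (2 * 1)
      = of_int (a*(t^2 + d*u^2) + 2*d*t*u) / 4 + of_int (t^2 + d*u^2 + 2*a*t*u) / 4 * ?D"
    using assms(1) by (simp add: power2_eq_square field_simps)
  then show "(of_int a + ?D) * ((of_int t + of_int u * ?D) / 2) powi (2 * 1)
      = of_rat (of_int (a*(t^2 + d*u^2) + 2*d*t*u) / 4) + of_rat (of_int (t^2 + d*u^2 + 2*a*t*u) / 4) * ?D"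
    by (simp add: of_rat_divide of_rat_add of_rat_mult of_rat_power)
qed

lemma yk_sign_eq_yk_one:
  fixes a d t u \<sigma> :: int
  assumes "0 \<le> d" and "t^2 - d*u^2 = 4 \<or> t^2 - d*u^2 = -4" and "\<sigma> \<in> {1, -1}"
  shows "yk a d t u \<sigma> = yk a d t (\<sigma>*u) 1"
proof -
  let ?D = "sqrt (of_int d) :: real"
  define \<epsilon> where "\<epsilon> = (of_int t + of_int u * ?D) / 2"
  define \<epsilon>' where "\<epsilon>' = (of_int t + of_int (-u) * ?D) / 2"
  have "\<epsilon> * \<epsilon>' = of_int (t^2 - d*u^2) / 4"
    using assms(1) by (simp add: \<epsilon>_def \<epsilon>'_def power2_eq_square field_simps)
  with assms(2) have "\<epsilon> * \<epsilon>' = 1 \<or> \<epsilon> * \<epsilon>' = -1" by (elim disjE) simp_all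
  then have "(\<epsilon> * \<epsilon>')^2 = 1" by auto
  then have "\<epsilon> powi (2 * -1) = \<epsilon>' powi (2 * 1)"
    by (simp add: power_int_minus power_mult_distrib inverse_unique)
  with assms(3) show ?thesis by (auto simp: yk_def \<epsilon>_def \<epsilon>'_def)
qed

lemma norm_pm4_coords_mod_4:
  fixes d t u :: int
  assumes "d mod 4 \<in> {1, 2}" and "even t"
  shows "(t^2 - d*u^2 = 4 \<longrightarrow> t mod 4 = 2 \<and> u mod 4 = 0) \<and> (t^2 - d*u^2 = -4 \<longrightarrow> u mod 4 = 2)"
proof -
  obtain T where T: "t = 2*T" using assms(2) by blast
  have halve: "\<exists>U. u = 2*U \<and> t^2 - d*u^2 = 4*(T^2 - d*U^2)" if div: "4 dvd t^2 - d*u^2"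
  proof -
    obtain U where "u = 2*U" using norm_div4_even_snd[OF assms div] by blast
    with T show ?thesis by (auto simp: power_mult_distrib algebra_simps)
  qed
  have "t mod 4 = 2 \<and> u mod 4 = 0" if norm: "t^2 - d*u^2 = 4"
  proof -
    obtain U where U: "u = 2*U" "t^2 - d*u^2 = 4*(T^2 - d*U^2)" using halve norm by auto
    with norm have "T^2 - d*U^2 = 1" by simp
    with assms(1) have "odd T \<and> even U" by (rule pell_plus_one_mod_4)
    with T U(1) show ?thesis by presburger
  qed
  moreover have "u mod 4 = 2" if norm: "t^2 - d*u^2 = -4"
  proof -
    obtain U where U: "u = 2*U" "t^2 - d*u^2 = 4*(T^2 - d*U^2)" using halve norm by auto
    with norm have "T^2 - d*U^2 = -1" by simp
    then have "odd U" by (rule pell_minus_one_mod_4)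
    with U(1) show ?thesis by presburger
  qed
  ultimately show ?thesis by blast
qed

theorem lemma5p4:
  fixes a d t u :: int
  assumes "a > 0" and "d > 0"
    and "\<not> (\<exists>r::int. d = r ^ 2)"
    and "\<exists>s::int. odd s \<and> -(a ^ 2 - d) = s ^ 2"
    and "t > 0" and "u > 0"
    and "is_unit_OK ((of_int t + of_int u * sqrt (of_int d)) / 2)"
    and "yk a d t u (-1) > 1"
    and "\<exists>\<sigma>\<in>{1, -1::int}. \<exists>m::int. yk a d t u \<sigma> = of_int (m ^ 2)"
  shows "(t ^ 2 - d * u ^ 2 = 4 \<longrightarrow> t mod 4 = 2 \<and> u mod 4 = 0)
       \<and> (t ^ 2 - d * u ^ 2 = -4 \<longrightarrow> u mod 4 = 2)"
proof -
  obtain s where "odd s" and d: "d = a^2 + s^2" using assms(4) by auto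
  have "0 \<le> d" using assms(2) by simp
  then have irrational: "sqrt (of_int d) \<notin> \<rat>" using assms(3) by (rule sqrt_of_int_not_rational)
  have ?thesis if norm: "t^2 - d*u^2 = 4 \<or> t^2 - d*u^2 = -4"
  proof -
    obtain \<sigma> m where \<sigma>: "\<sigma> \<in> {1, -1}" and square: "yk a d t u \<sigma> = of_int (m^2)"
      using assms(9) by blast
    define w where "w = \<sigma> * u"
    have "w^2 = u^2" using \<sigma> by (auto simp: w_def power_mult_distrib)
    have "of_int (t^2 + d*w^2 + 2*a*t*w) / 4 = (of_int (m^2) :: rat)"
      using square yk_sign_eq_yk_one[OF \<open>0 \<le> d\<close> norm \<sigma>] yk_one[OF \<open>0 \<le> d\<close> irrational]
      by (simp add: w_def)
    then have "(of_int (t^2 + d*w^2 + 2*a*t*w) :: rat) = of_int (4 * m^2)" by simp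
    then have "t^2 + d*w^2 + 2*a*t*w = 4 * m^2" by (simp only: of_int_eq_iff)
    then have "4 dvd t^2 + d*w^2 + 2*a*t*w" by simp
    moreover have "t^2 - d*w^2 = 4 \<or> t^2 - d*w^2 = -4" using norm \<open>w^2 = u^2\<close> by simp
    ultimately have "even t" using norm_pm4_even_fst[OF \<open>odd s\<close> d] by blast
    moreover have "d mod 4 \<in> {1, 2}" using d sum_of_squares_odd_mod_4[OF \<open>odd s\<close>] by simp
    ultimately show ?thesis using norm_pm4_coords_mod_4 by blast
  qed
  then show ?thesis by auto
qed

end
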